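(* Let $h$ be the two-dimensional Euclid's hat function. For every integer $n\ge2$, every $s>0$ and every configuration $(\zeta_1,\dots,\zeta_n)$ with $\zeta_j=(\sigma_j,x_j)\in\{-1,1\}\times\mathbb{R}^2$, $$U_n(\zeta_1,\dots,\zeta_n;h(\cdot/s)):=\sum_{1\le i<j\le n}\sigma_i\sigma_j\,h\!\left(|x_i-x_j|/s\right)\ \ge\ -\frac{1}{2}\left(n-\Big|\sum_{j=1}^n\sigma_j\Big|\right).$$
   Context: The Euclid's hat is $h:[0,\infty)\to[0,1]$, $h(w)=\frac{2}{\pi}(\arccos w-w\sqrt{1-w^2})$ for $0\le w\le1$ and $h(w)=0$ for $w>1$; equivalently $h(|x|/s)=\frac{4}{\pi s^2}(\chi_{s/2}\ast\chi_{s/2})(x)$ where $\chi_r$ is the indicator of the disc of radius $r$ centered at $0$ in $\mathbb{R}^2$. Note $h(0)=1$. *)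

theory Defs
  imports "HOL-Analysis.Analysis"
begin

definition euclid_hat :: "real \<Rightarrow> real" where
  "euclid_hat w = (if 0 \<le> w \<and> w \<le> 1 then (2 / pi) * (arccos w - w * sqrt (1 - w\<^sup>2)) else 0)"

definition U_energy :: "nat \<Rightarrow> (nat \<Rightarrow> real) \<Rightarrow> (nat \<Rightarrow> real^2) \<Rightarrow> real \<Rightarrow> real" where
  "U_energy n \<sigma> x s =
     (\<Sum>j\<in>{1..n}. \<Sum>i\<in>{1..<j}. \<sigma> i * \<sigma> j * euclid_hat (dist (x i) (x j) / s))"

end

theory Submission
  imports Defs
begin

text \<open>
  For discs \<open>B\<^sub>j\<close> of radius \<open>s/2\<close> centred at \<open>x\<^sub>j\<close>, the hat satisfies
  \<open>|B\<^sub>i \<inter> B\<^sub>j| = |B| h(|x\<^sub>i - x\<^sub>j|/s)\<close>; this lens area is computed by slicing the lens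
  into vertical chords. Hence \<open>|B| \<Sum>\<^sub>i\<^sub>,\<^sub>j \<sigma>\<^sub>i \<sigma>\<^sub>j h(|x\<^sub>i - x\<^sub>j|/s) = \<integral> F\<^sup>2\<close> for
  \<open>F = \<Sum>\<^sub>j \<sigma>\<^sub>j 1\<^bsub>B\<^sub>j\<^esub>\<close>. As \<open>F\<close> is integer-valued, \<open>F\<^sup>2 \<ge> |F|\<close>, so
  \<open>\<integral> F\<^sup>2 \<ge> |\<integral> F| = |B| |\<Sum>\<^sub>j \<sigma>\<^sub>j|\<close>. The double sum is \<open>n + 2 U\<^sub>n\<close>, since its diagonal terms are 1.
\<close>

definition circle_primitive :: "real \<Rightarrow> real \<Rightarrow> real" where
  "circle_primitive r w = (w * sqrt (r\<^sup>2 - w\<^sup>2) + r\<^sup>2 * arcsin (w / r)) / 2"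

lemma circle_primitive_has_real_derivative:
  assumes r: "r > 0" and w: "\<bar>w\<bar> < r"
  shows "(circle_primitive r has_real_derivative sqrt (r\<^sup>2 - w\<^sup>2)) (at w)"
proof -
  have "w\<^sup>2 < r\<^sup>2" using power_strict_mono[of "\<bar>w\<bar>" r 2] w by simp
  then have pos: "r\<^sup>2 - w\<^sup>2 > 0" by simp
  have wr: "\<bar>w / r\<bar> < 1" using w r by (simp add: abs_div)
  have q: "sqrt (r * r - w * w) * sqrt (r * r - w * w) = r * r - w * w"
    using pos by (simp add: power2_eq_square)
  show ?thesis
    unfolding circle_primitive_def[abs_def] using wr r pos
    by (auto intro!: derivative_eq_intros
        simp: abs_less_iff real_sqrt_divide field_simps power2_eq_square q)
qed

lemma continuous_on_circle_primitive: "r > 0 \<Longrightarrow> continuous_on {-r..r} (circle_primitive r)"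
  unfolding circle_primitive_def by (intro continuous_intros) (auto simp: field_simps)

lemma circle_primitive_minus:
  assumes "r > 0" "\<bar>w\<bar> \<le> r"
  shows "circle_primitive r (- w) = - circle_primitive r w"
proof -
  have "- 1 \<le> w / r" "w / r \<le> 1" using assms by (auto simp: field_simps abs_le_iff)
  then have "arcsin (- (w / r)) = - arcsin (w / r)" by (rule arcsin_minus)
  then show ?thesis by (simp add: circle_primitive_def field_simps)
qed

lemma circle_primitive_has_integral:
  assumes r: "r > 0" and ab: "-r \<le> a" "a \<le> b" "b \<le> r"
  shows "((\<lambda>u. sqrt (r\<^sup>2 - u\<^sup>2)) has_integral circle_primitive r b - circle_primitive r a) {a..b}"
proof (rule fundamental_theorem_of_calculus_interior)
  show "continuous_on {a..b} (circle_primitive r)"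
    using continuous_on_circle_primitive[OF r] by (rule continuous_on_subset) (use ab in auto)
  fix u assume "u \<in> {a<..<b}"
  then have "\<bar>u\<bar> < r" using ab by auto
  then show "(circle_primitive r has_vector_derivative sqrt (r\<^sup>2 - u\<^sup>2)) (at u)"
    using circle_primitive_has_real_derivative[OF r]
    by (simp add: has_real_derivative_iff_has_vector_derivative)
qed (use ab in auto)

text \<open>The length of the vertical chord at abscissa \<open>u\<close> of the intersection of the discs of
  radius \<open>r\<close> centred at \<open>(0, 0)\<close> and \<open>(d, 0)\<close>.\<close>
definition lens_chord :: "real \<Rightarrow> real \<Rightarrow> real \<Rightarrow> real" where
  "lens_chord r d u = 2 * sqrt (max 0 (min (r\<^sup>2 - u\<^sup>2) (r\<^sup>2 - (u - d)\<^sup>2)))"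

lemma lens_chord_right:
  assumes "0 \<le> d" "d / 2 \<le> u" "u \<le> r"
  shows "lens_chord r d u = 2 * sqrt (r\<^sup>2 - u\<^sup>2)"
proof -
  have "u\<^sup>2 - (u - d)\<^sup>2 = d * (2 * u - d)" by (simp add: power2_eq_square algebra_simps)
  moreover have "0 \<le> d * (2 * u - d)" using assms by (intro mult_nonneg_nonneg) auto
  ultimately have "(u - d)\<^sup>2 \<le> u\<^sup>2" by linarith
  moreover have "u\<^sup>2 \<le> r\<^sup>2" using assms by (intro power_mono) auto
  ultimately show ?thesis unfolding lens_chord_def by simp
qed

lemma lens_chord_left:
  assumes "0 \<le> d" "d - r \<le> u" "u \<le> d / 2"
  shows "lens_chord r d u = 2 * sqrt (r\<^sup>2 - (u - d)\<^sup>2)"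
proof -
  have "(u - d)\<^sup>2 - u\<^sup>2 = d * (d - 2 * u)" by (simp add: power2_eq_square algebra_simps)
  moreover have "0 \<le> d * (d - 2 * u)" using assms by (intro mult_nonneg_nonneg) auto
  ultimately have "u\<^sup>2 \<le> (u - d)\<^sup>2" by linarith
  moreover have "(d - u)\<^sup>2 \<le> r\<^sup>2" using assms by (intro power_mono) auto
  then have "(u - d)\<^sup>2 \<le> r\<^sup>2" by (simp add: power2_commute)
  ultimately show ?thesis unfolding lens_chord_def by simp
qed

lemma lens_chord_has_integral:
  assumes r: "r > 0" and d: "0 \<le> d" "d < 2 * r"
  shows "(lens_chord r d has_integral 4 * (circle_primitive r r - circle_primitive r (d / 2))) {d - r..r}"
proof -
  let ?P = "circle_primitive r"
  have "((\<lambda>u. 2 * sqrt (r\<^sup>2 - u\<^sup>2)) has_integral 2 * (?P r - ?P (d / 2))) {d / 2..r}"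
    using circle_primitive_has_integral[OF r, of "d / 2" r] d by (intro has_integral_mult_right) auto
  then have right: "(lens_chord r d has_integral 2 * (?P r - ?P (d / 2))) {d / 2..r}"
    by (rule has_integral_eq[rotated]) (use d lens_chord_right in auto)
  have "((\<lambda>u. 2 * sqrt (r\<^sup>2 - u\<^sup>2)) has_integral 2 * (?P (- (d / 2)) - ?P (- r))) {- r..- (d / 2)}"
    using circle_primitive_has_integral[OF r, of "- r" "- (d / 2)"] d by (intro has_integral_mult_right) auto
  then have "((\<lambda>u. 2 * sqrt (r\<^sup>2 - (u - d)\<^sup>2)) has_integral 2 * (?P r - ?P (d / 2))) {d - r..d / 2}"
    using has_integral_affinity'[of _ _ "- r" "- (d / 2)" 1 "- d"] r d
    by (simp add: circle_primitive_minus)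
  then have left: "(lens_chord r d has_integral 2 * (?P r - ?P (d / 2))) {d - r..d / 2}"
    by (rule has_integral_eq[rotated]) (use d lens_chord_left in auto)
  have "(lens_chord r d has_integral 2 * (?P r - ?P (d / 2)) + 2 * (?P r - ?P (d / 2))) {d - r..r}"
    by (rule has_integral_combine[OF _ _ left right]) (use d in auto)
  then show ?thesis by (simp add: field_simps)
qed

lemma lens_chord_eq_0:
  assumes "r > 0" "u \<notin> {d - r..r}"
  shows "lens_chord r d u = 0"
proof -
  have "r\<^sup>2 \<le> u\<^sup>2 \<or> r\<^sup>2 \<le> (u - d)\<^sup>2"
  proof (cases "u > r")
    case True
    then show ?thesis using assms by (simp add: power_mono)
  next
    case False
    then have "r\<^sup>2 \<le> (d - u)\<^sup>2" using assms by (intro power_mono) auto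
    then show ?thesis by (simp add: power2_commute)
  qed
  then show ?thesis by (auto simp: lens_chord_def)
qed

lemma emeasure_lborel_power2_less:
  "emeasure lborel {v :: real. v\<^sup>2 < m} = ennreal (2 * sqrt (max 0 m))"
proof (cases "m > 0")
  case True
  have "v\<^sup>2 < m \<longleftrightarrow> v \<in> {- sqrt m <..< sqrt m}" for v
    using real_sqrt_less_iff[of "v\<^sup>2" m] by (auto simp: abs_less_iff simp del: real_sqrt_less_iff)
  then have "{v. v\<^sup>2 < m} = {- sqrt m <..< sqrt m}" by blast
  then show ?thesis using True by simp
next
  case False
  then have "{v :: real. v\<^sup>2 < m} = {}" by (auto intro: order.trans[OF _ zero_le_power2] simp: not_less)
  then show ?thesis using False by simp
qed

lemma emeasure_lborel_pair_lens:
  assumes r: "r > 0" and d: "0 \<le> d" "d < 2 * r"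
  shows "emeasure (lborel :: (real \<times> real) measure)
           {p. (fst p)\<^sup>2 + (snd p)\<^sup>2 < r\<^sup>2 \<and> (fst p - d)\<^sup>2 + (snd p)\<^sup>2 < r\<^sup>2}
         = ennreal (4 * (circle_primitive r r - circle_primitive r (d / 2)))"
proof -
  let ?A = "{p :: real \<times> real. (fst p)\<^sup>2 + (snd p)\<^sup>2 < r\<^sup>2 \<and> (fst p - d)\<^sup>2 + (snd p)\<^sup>2 < r\<^sup>2}"
  have "?A \<in> sets borel"
    by (intro borel_open open_Collect_conj open_Collect_less continuous_intros)
  then have "?A \<in> sets (lborel \<Otimes>\<^sub>M lborel)" by (simp only: lborel_prod sets_lborel)
  then have "emeasure lborel ?A = (\<integral>\<^sup>+u. emeasure lborel (Pair u -` ?A) \<partial>lborel)"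
    by (simp only: lborel_prod[symmetric] lborel.emeasure_pair_measure_alt)
  also have "\<dots> = (\<integral>\<^sup>+u. ennreal (lens_chord r d u) * indicator {d - r..r} u \<partial>lborel)"
  proof (rule nn_integral_cong)
    fix u :: real
    have "Pair u -` ?A = {v. v\<^sup>2 < min (r\<^sup>2 - u\<^sup>2) (r\<^sup>2 - (u - d)\<^sup>2)}" by auto
    then have "emeasure lborel (Pair u -` ?A) = ennreal (lens_chord r d u)"
      unfolding lens_chord_def by (simp only: emeasure_lborel_power2_less)
    then show "emeasure lborel (Pair u -` ?A) = ennreal (lens_chord r d u) * indicator {d - r..r} u"
      using lens_chord_eq_0[OF r] by (cases "u \<in> {d - r..r}") auto
  qed
  also have "\<dots> = ennreal (4 * (circle_primitive r r - circle_primitive r (d / 2)))"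
    by (rule nn_integral_has_integral_lebesgue'[OF _ lens_chord_has_integral[OF r d]])
       (simp add: lens_chord_def)
  finally show ?thesis .
qed

definition vec2_of_pair :: "real \<times> real \<Rightarrow> real^2" where
  "vec2_of_pair p = (\<chi> i. if i = 1 then fst p else snd p)"

lemma vec2_of_pair_nth [simp]: "vec2_of_pair p $ 1 = fst p" "vec2_of_pair p $ 2 = snd p"
  by (simp_all add: vec2_of_pair_def)

lemma vec2_of_pair_measurable [measurable]: "vec2_of_pair \<in> borel \<rightarrow>\<^sub>M borel"
  unfolding vec2_of_pair_def
proof (intro borel_measurable_continuous_onI continuous_on_vec_lambda)
  fix i :: 2
  show "continuous_on UNIV (\<lambda>p :: real \<times> real. if i = 1 then fst p else snd p)"
    by (cases "i = 1") (auto intro!: continuous_intros)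
qed

lemma distr_lborel_vec2_of_pair: "distr lborel borel vec2_of_pair = (lborel :: (real^2) measure)"
proof (rule lborel_eqI[symmetric])
  have Basis: "(Basis :: (real^2) set) = {axis 1 1, axis 2 1}"
    by (auto simp: Basis_vec_def) (metis exhaust_2)
  have axes: "axis 1 1 \<noteq> (axis 2 1 :: real^2)" by (simp add: axis_eq_axis)
  fix l u :: "real^2" assume lu: "\<And>b. b \<in> Basis \<Longrightarrow> l \<bullet> b \<le> u \<bullet> b"
  have le: "l$1 \<le> u$1" "l$2 \<le> u$2"
    using lu[of "axis 1 1"] lu[of "axis 2 1"] by (simp_all add: Basis inner_axis)
  have "vec2_of_pair -` box l u = {l$1<..<u$1} \<times> {l$2<..<u$2}"
    by (auto simp: mem_box_cart forall_2)
  moreover have "vec2_of_pair \<in> lborel \<rightarrow>\<^sub>M borel" by (simp only: measurable_lborel2) measurable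
  ultimately have "emeasure (distr lborel borel vec2_of_pair) (box l u)
      = emeasure (lborel \<Otimes>\<^sub>M lborel) ({l$1<..<u$1} \<times> {l$2<..<u$2})"
    by (simp add: emeasure_distr lborel_prod)
  also have "\<dots> = ennreal ((u$1 - l$1) * (u$2 - l$2))"
    using le by (simp add: lborel.emeasure_pair_measure_Times ennreal_mult)
  also have "(u$1 - l$1) * (u$2 - l$2) = (\<Prod>b\<in>Basis. (u - l) \<bullet> b)"
    using axes by (simp add: Basis inner_axis)
  finally show "emeasure (distr lborel borel vec2_of_pair) (box l u) = (\<Prod>b\<in>Basis. (u - l) \<bullet> b)" .
qed simp

lemma measure_ball_Int_ball_axis:
  assumes r: "r > 0" and d: "0 \<le> d" "d < 2 * r"
  shows "measure lebesgue (ball 0 r \<inter> ball (d *\<^sub>R axis 1 1) r :: (real^2) set)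
         = 4 * (circle_primitive r r - circle_primitive r (d / 2))"
proof -
  let ?S = "ball 0 r \<inter> ball (d *\<^sub>R axis 1 1) r :: (real^2) set"
  have "vec2_of_pair -` ?S
      = {p. (fst p)\<^sup>2 + (snd p)\<^sup>2 < r\<^sup>2 \<and> (fst p - d)\<^sup>2 + (snd p)\<^sup>2 < r\<^sup>2}"
    using r by (auto simp: dist_norm norm_lt_square inner_vec_def sum_2 axis_def power2_eq_square algebra_simps)
  moreover have "vec2_of_pair \<in> lborel \<rightarrow>\<^sub>M borel" by (simp only: measurable_lborel2) measurable
  ultimately have "emeasure lborel ?S = ennreal (4 * (circle_primitive r r - circle_primitive r (d / 2)))"
    by (simp add: distr_lborel_vec2_of_pair[symmetric] emeasure_distr emeasure_lborel_pair_lens[OF r d]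
        borel_open open_Int)
  moreover have "0 \<le> 4 * (circle_primitive r r - circle_primitive r (d / 2))"
    by (rule has_integral_nonneg[OF lens_chord_has_integral[OF r d]]) (simp add: lens_chord_def)
  ultimately show ?thesis by (simp add: measure_def)
qed

lemma circle_primitive_lens_eq_euclid_hat:
  assumes r: "r > 0" and d: "0 \<le> d" "d < 2 * r"
  shows "4 * (circle_primitive r r - circle_primitive r (d / 2)) = pi * r\<^sup>2 * euclid_hat (d / (2 * r))"
proof -
  define w where "w = d / (2 * r)"
  have w: "0 \<le> w" "w < 1" "d / 2 = r * w" using r d by (auto simp: w_def field_simps)
  have "r\<^sup>2 - (r * w)\<^sup>2 = r\<^sup>2 * (1 - w\<^sup>2)" by (simp add: algebra_simps power2_eq_square)
  then have "sqrt (r\<^sup>2 - (r * w)\<^sup>2) = r * sqrt (1 - w\<^sup>2)" using r by (simp add: real_sqrt_mult)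
  then have P_half: "circle_primitive r (d / 2) = (r * w * (r * sqrt (1 - w\<^sup>2)) + r\<^sup>2 * arcsin w) / 2"
    using r by (simp add: w(3) circle_primitive_def)
  have P_r: "circle_primitive r r = pi * r\<^sup>2 / 4" using r by (simp add: circle_primitive_def)
  have arcsin: "arcsin w = pi / 2 - arccos w" using w by (intro arcsin_arccos_eq) auto
  show ?thesis
    unfolding w_def[symmetric] P_half P_r arcsin using w by (simp add: euclid_hat_def field_simps power2_eq_square)
qed

lemma measure_ball_Int_ball:
  fixes a b :: "real^2"
  assumes r: "r > 0"
  shows "measure lebesgue (ball a r \<inter> ball b r) = pi * r\<^sup>2 * euclid_hat (dist a b / (2 * r))"
proof (cases "dist a b < 2 * r")
  case False
  have "ball a r \<inter> ball b r = {}"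
  proof (rule ccontr)
    assume "ball a r \<inter> ball b r \<noteq> {}"
    then obtain z where "dist a z < r" "dist b z < r" by auto
    then show False using False dist_triangle3[of a b z] by (simp add: dist_commute)
  qed
  moreover have "euclid_hat (dist a b / (2 * r)) = 0"
    using False r by (simp add: euclid_hat_def field_simps)
  ultimately show ?thesis by simp
next
  case True
  define v where "v = b - a"
  obtain f :: "real^2 \<Rightarrow> real^2" where f: "orthogonal_transformation f" "f (norm v *\<^sub>R axis 1 1) = v"
    using rotation_rightward_line[of v 1] by blast
  let ?S = "ball 0 r \<inter> ball (norm v *\<^sub>R axis 1 1) r :: (real^2) set"
  have "f 0 = 0" using f(1) by (simp add: orthogonal_transformation linear_0)
  then have rotate: "f ` ?S = ball 0 r \<inter> ball v r"
    using f by (simp add: image_Int orthogonal_transformation_inj image_orthogonal_transformation_ball)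
  have translate: "(+) a ` (ball 0 r \<inter> ball v r) = ball a r \<inter> ball b r"
    by (simp add: image_Int v_def)
  have "norm v = dist a b" by (simp add: v_def dist_norm norm_minus_commute)
  have "measure lebesgue (ball a r \<inter> ball b r) = measure lebesgue (ball 0 r \<inter> ball v r)"
    by (simp only: translate[symmetric] measure_translation)
  also have "\<dots> = measure lebesgue ?S"
    unfolding rotate[symmetric] by (rule measure_orthogonal_image[OF f(1)]) (intro fmeasurable_Int_fmeasurable, auto)
  also have "\<dots> = pi * r\<^sup>2 * euclid_hat (dist a b / (2 * r))"
    using True r \<open>norm v = dist a b\<close> measure_ball_Int_ball_axis[OF r, of "dist a b"]
      circle_primitive_lens_eq_euclid_hat[OF r, of "dist a b"]
    by simp
  finally show ?thesis .
qed

lemma Ints_abs_le_power2: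
  fixes x :: "'a :: linordered_idom"
  assumes "x \<in> \<int>"
  shows "\<bar>x\<bar> \<le> x\<^sup>2"
proof (cases "x = 0")
  case False
  then have "\<bar>x\<bar> * 1 \<le> \<bar>x\<bar> * \<bar>x\<bar>"
    using Ints_nonzero_abs_ge1[OF assms] by (intro mult_left_mono) auto
  then show ?thesis by (simp add: power2_eq_square)
qed simp

lemma abs_sum_measure_le_sum_measure_Int:
  fixes M :: "'a measure" and A :: "'i \<Rightarrow> 'a set" and c :: "'i \<Rightarrow> real"
  assumes A: "\<And>i. i \<in> I \<Longrightarrow> A i \<in> sets M" "\<And>i. i \<in> I \<Longrightarrow> emeasure M (A i) < \<infinity>"
    and c: "\<And>i. i \<in> I \<Longrightarrow> c i \<in> \<int>"
  shows "\<bar>\<Sum>i\<in>I. c i * measure M (A i)\<bar> \<le> (\<Sum>i\<in>I. \<Sum>j\<in>I. c i * c j * measure M (A i \<inter> A j))"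
proof -
  define F where "F z = (\<Sum>i\<in>I. c i * indicator (A i) z)" for z
  have A_Int: "A i \<inter> A j \<in> sets M" "emeasure M (A i \<inter> A j) < \<infinity>" if "i \<in> I" "j \<in> I" for i j
    using A[OF that(1)] A(1)[OF that(2)] emeasure_mono[of "A i \<inter> A j" "A i" M] by auto
  have F_square: "(F z)\<^sup>2 = (\<Sum>i\<in>I. \<Sum>j\<in>I. c i * c j * indicator (A i \<inter> A j) z)" for z
    unfolding F_def power2_eq_square sum_product
    by (intro sum.cong refl) (simp add: indicator_inter_arith mult_ac)
  have "\<bar>\<Sum>i\<in>I. c i * measure M (A i)\<bar> = \<bar>integral\<^sup>L M F\<bar>"
    unfolding F_def using A by (simp add: Bochner_Integration.integral_sum)
  also have "\<dots> \<le> integral\<^sup>L M (\<lambda>z. \<bar>F z\<bar>)"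
    by (rule integral_abs_bound)
  also have "\<dots> \<le> integral\<^sup>L M (\<lambda>z. (F z)\<^sup>2)"
  proof (rule integral_mono')
    show "integrable M (\<lambda>z. (F z)\<^sup>2)" unfolding F_square using A_Int by simp
    have "F z \<in> \<int>" for z unfolding F_def using c by (auto simp: indicator_def)
    then show "\<bar>F z\<bar> \<le> (F z)\<^sup>2" for z by (rule Ints_abs_le_power2)
  qed simp
  also have "\<dots> = (\<Sum>i\<in>I. \<Sum>j\<in>I. c i * c j * measure M (A i \<inter> A j))"
    unfolding F_square using A_Int by (simp add: Bochner_Integration.integral_sum)
  finally show ?thesis .
qed

lemma sum_sum_symmetric:
  fixes g :: "nat \<Rightarrow> nat \<Rightarrow> 'a :: comm_semiring_1"
  assumes "\<And>i j. g i j = g j i"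
  shows "(\<Sum>i\<in>{1..n}. \<Sum>j\<in>{1..n}. g i j) = (\<Sum>j\<in>{1..n}. g j j) + 2 * (\<Sum>j\<in>{1..n}. \<Sum>i\<in>{1..<j}. g i j)"
proof (induction n)
  case (Suc n)
  let ?m = "Suc n"
  have "{1..<?m} = {1..n}" by auto
  then have column: "(\<Sum>i\<in>{1..n}. g i ?m) = (\<Sum>i\<in>{1..<?m}. g i ?m)" by simp
  have "(\<Sum>i\<in>{1..?m}. \<Sum>j\<in>{1..?m}. g i j)
      = (\<Sum>i\<in>{1..n}. \<Sum>j\<in>{1..n}. g i j) + (\<Sum>i\<in>{1..n}. g i ?m) + (\<Sum>j\<in>{1..n}. g ?m j) + g ?m ?m"
    by (simp add: sum.distrib algebra_simps)
  also have "(\<Sum>j\<in>{1..n}. g ?m j) = (\<Sum>i\<in>{1..n}. g i ?m)"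
    using assms by simp
  finally show ?case
    using Suc.IH column by (simp add: algebra_simps mult_2)
qed simp

lemma euclid_hat_0 [simp]: "euclid_hat 0 = 1"
  by (simp add: euclid_hat_def)

theorem theorem2p6:
  fixes n :: nat and s :: real and \<sigma> :: "nat \<Rightarrow> real" and x :: "nat \<Rightarrow> real^2"
  assumes "n \<ge> 2" and "s > 0"
    and "\<And>j. j \<in> {1..n} \<Longrightarrow> \<sigma> j \<in> {-1, 1}"
  shows "U_energy n \<sigma> x s \<ge> - (1/2) * (real n - \<bar>\<Sum>j\<in>{1..n}. \<sigma> j\<bar>)"
proof -
  define B where "B j = ball (x j) (s / 2)" for j
  define g where "g i j = \<sigma> i * \<sigma> j * euclid_hat (dist (x i) (x j) / s)" for i j
  define area where "area = pi * (s / 2)\<^sup>2"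
  have lens: "measure lebesgue (B i \<inter> B j) = area * euclid_hat (dist (x i) (x j) / s)" for i j
    using measure_ball_Int_ball[of "s / 2" "x i" "x j"] \<open>s > 0\<close> by (simp add: B_def area_def)
  have "area * \<bar>\<Sum>j\<in>{1..n}. \<sigma> j\<bar> = \<bar>\<Sum>j\<in>{1..n}. \<sigma> j * measure lebesgue (B j)\<bar>"
    using lens[of j j for j] by (simp add: abs_mult area_def flip: sum_distrib_right)
  also have "\<dots> \<le> (\<Sum>i\<in>{1..n}. \<Sum>j\<in>{1..n}. \<sigma> i * \<sigma> j * measure lebesgue (B i \<inter> B j))"
  proof (rule abs_sum_measure_le_sum_measure_Int)
    show "emeasure lebesgue (B j) < \<infinity>" for j
      using emeasure_lborel_ball_finite by (simp add: B_def)
    show "\<sigma> j \<in> \<int>" if "j \<in> {1..n}" for j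
      using assms(3)[OF that] by auto
  qed (auto simp: B_def)
  also have "\<dots> = area * (\<Sum>i\<in>{1..n}. \<Sum>j\<in>{1..n}. g i j)"
    by (simp add: lens g_def sum_distrib_left mult_ac)
  also have "(\<Sum>i\<in>{1..n}. \<Sum>j\<in>{1..n}. g i j)
      = (\<Sum>j\<in>{1..n}. g j j) + 2 * (\<Sum>j\<in>{1..n}. \<Sum>i\<in>{1..<j}. g i j)"
    by (rule sum_sum_symmetric) (simp add: g_def dist_commute)
  also have "(\<Sum>j\<in>{1..n}. \<Sum>i\<in>{1..<j}. g i j) = U_energy n \<sigma> x s"
    by (simp add: g_def U_energy_def)
  also have "(\<Sum>j\<in>{1..n}. g j j) = (\<Sum>j\<in>{1..n}. 1)"
    using assms(3) by (intro sum.cong) (auto simp: g_def, fastforce)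
  finally have "\<bar>\<Sum>j\<in>{1..n}. \<sigma> j\<bar> \<le> real n + 2 * U_energy n \<sigma> x s"
    using \<open>s > 0\<close> by (simp add: area_def)
  then show ?thesis by (simp add: field_simps)
qed

end
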